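(* Let $1<p<\infty$ and $W:\mathbb{M}^{3\times3}\to[0,+\infty]$ satisfy (H1)–(H5) below. Let $\Omega\subset\mathbb{R}^2$ be open and bounded, $\eta>0$, and $G:\overline\Omega\to\mathbb{M}^{3\times2}$ uniformly continuous with $|G^1(x)\wedge G^2(x)|\geq\eta$ for every $x\in\overline\Omega$. For $j\geq1$ let $\Lambda_j(x):=\{\zeta\in\mathbb{R}^3:\det(G(x)|\zeta)\geq1/j,\ |\zeta|\leq j\}$ for $x\in\overline\Omega$. Then there exists $j(\eta,\|G\|_{L^\infty})$ such that for every $j\geq j(\eta,\|G\|_{L^\infty})$, $$\inf_{\phi\in C^\infty(\overline\Omega,\Lambda_j)}\int_\Omega W(G(x)|\phi(x))\,dx=\int_\Omega\inf_{\zeta\in\Lambda_j(x)}W(G(x)|\zeta)\,dx,$$ where $C^\infty(\overline\Omega,\Lambda_j)$ denotes the maps $\phi\in C^\infty(\overline\Omega,\mathbb{R}^3)$ with $\phi(x)\in\Lambda_j(x)$ for all $x\in\overline\Omega$.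
   Context: Hypotheses: (H1) $W$ continuous as a $[0,+\infty]$-valued function; (H2) $W(RF)=W(F)$ for $R\in SO(3)$; (H3) $W(F)<\infty$ if $\det F>0$ and $W(F)=+\infty$ if $\det F\leq0$; (H4) $W(F)\geq C_1|F|^p-1/C_1$; (H5) for each $\delta>0$, $W(F)\leq c_\delta(1+|F|^p)$ when $\det F\geq\delta$. $G^1,G^2$ are the columns of $G$, $\wedge$ the vector product, $(A|\zeta)$ the $3\times3$ matrix with columns $A^1,A^2,\zeta$. *)

theory Defs
  imports "HOL-Analysis.Analysis" "HOL-Analysis.Cross3"
begin

primrec Ck :: "nat \<Rightarrow> ('a::euclidean_space \<Rightarrow> 'b::real_normed_vector) \<Rightarrow> bool" where
  "Ck 0 f = continuous_on UNIV f"
| "Ck (Suc k) f = (\<exists>f'. (\<forall>x. (f has_derivative f' x) (at x)) \<and> (\<forall>v. Ck k (\<lambda>x. f' x v)))"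

definition smooth_map :: "('a::euclidean_space \<Rightarrow> 'b::real_normed_vector) \<Rightarrow> bool" where
  "smooth_map f = (\<forall>k. Ck k f)"

text \<open>The 3x3 matrix (A|z) with columns A^1, A^2, z (A a 3x2 matrix).\<close>
definition augm :: "real^2^3 \<Rightarrow> real^3 \<Rightarrow> real^3^3" where
  "augm A z = (\<chi> i k. if k = 1 then A $ i $ 1 else if k = 2 then A $ i $ 2 else z $ i)"

definition Lambda :: "(real^2 \<Rightarrow> real^2^3) \<Rightarrow> nat \<Rightarrow> real^2 \<Rightarrow> (real^3) set" where
  "Lambda G j x = {z. det (augm (G x) z) \<ge> 1 / real j \<and> norm z \<le> real j}"

definition SO3 :: "(real^3^3) set" where
  "SO3 = {R. orthogonal_matrix R \<and> det R = 1}"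

end

theory Submission
  imports Defs
begin

text \<open>Write n(x) = G^1(x) \<times> G^2(x), so that det (G(x)|z) = z \<cdot> n(x). Once j \<eta> \<ge> 4 the point
  (j/2) n(x)/|n(x)| lies in Lambda_j(x) with a margin that is uniform in x, and by (H5) W is bounded on
  the admissible matrices. The pointwise infimum m(x) of W(G(x)|\<cdot>) over Lambda_j(x) is lower
  semicontinuous, and near every point it is attained up to \<epsilon> by one constant vector lying in
  Lambda_j(y) with a margin for all nearby y. Finitely many such constants, glued with cutoffs that
  sharpen into indicators and then approximated by polynomials (Stone-Weierstrass), give smooth
  admissible maps whose energies have limsup at most the integral of m + \<epsilon> by reverse Fatou.\<close>

section \<open>Polynomial maps are smooth\<close>

lemma real_polynomial_function_has_derivative:
  fixes p :: "'a::euclidean_space \<Rightarrow> real"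
  assumes "real_polynomial_function p"
  shows "\<exists>p'. (\<forall>x. (p has_derivative p' x) (at x)) \<and> (\<forall>v. real_polynomial_function (\<lambda>x. p' x v))"
  using assms
proof (induction p rule: real_polynomial_function.induct)
  case (linear f)
  then show ?case
    by (intro exI[of _ "\<lambda>x. f"]) (auto intro: bounded_linear_imp_has_derivative)
next
  case (const c)
  then show ?case by (intro exI[of _ "\<lambda>x v. 0"]) auto
next
  case (add f g)
  then obtain f' g' where "\<forall>x. (f has_derivative f' x) (at x)" "\<forall>v. real_polynomial_function (\<lambda>x. f' x v)"
    and "\<forall>x. (g has_derivative g' x) (at x)" "\<forall>v. real_polynomial_function (\<lambda>x. g' x v)" by blast
  then show ?case
    by (intro exI[of _ "\<lambda>x v. f' x v + g' x v"])
      (auto intro!: has_derivative_add real_polynomial_function.intros(3))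
next
  case (mult f g)
  then obtain f' g' where "\<forall>x. (f has_derivative f' x) (at x)" "\<forall>v. real_polynomial_function (\<lambda>x. f' x v)"
    and "\<forall>x. (g has_derivative g' x) (at x)" "\<forall>v. real_polynomial_function (\<lambda>x. g' x v)" by blast
  with mult.hyps show ?case
    by (intro exI[of _ "\<lambda>x v. f x * g' x v + f' x v * g x"])
      (auto intro!: has_derivative_mult real_polynomial_function.intros(3,4))
qed

lemma polynomial_function_has_derivative:
  fixes p :: "'a::euclidean_space \<Rightarrow> 'b::euclidean_space"
  assumes "polynomial_function p"
  shows "\<exists>p'. (\<forall>x. (p has_derivative p' x) (at x)) \<and> (\<forall>v. polynomial_function (\<lambda>x. p' x v))"
proof -
  have "\<forall>b\<in>Basis. \<exists>q. (\<forall>x. ((\<lambda>x. p x \<bullet> b) has_derivative q x) (at x)) \<and>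
      (\<forall>v. real_polynomial_function (\<lambda>x. q x v))"
    using assms real_polynomial_function_has_derivative
    unfolding polynomial_function_iff_Basis_inner by blast
  then obtain q where q: "\<And>b. b \<in> Basis \<Longrightarrow> (\<forall>x. ((\<lambda>x. p x \<bullet> b) has_derivative q b x) (at x)) \<and>
      (\<forall>v. real_polynomial_function (\<lambda>x. q b x v))"
    by metis
  have p_eq: "p = (\<lambda>x. \<Sum>b\<in>Basis. (p x \<bullet> b) *\<^sub>R b)" by (simp add: euclidean_representation)
  show ?thesis
  proof (intro exI[of _ "\<lambda>x v. \<Sum>b\<in>Basis. q b x v *\<^sub>R b"] conjI allI)
    show "(p has_derivative (\<lambda>v. \<Sum>b\<in>Basis. q b x v *\<^sub>R b)) (at x)" for x
      using q by (subst p_eq) (auto intro!: has_derivative_sum has_derivative_scaleR_left)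
    show "polynomial_function (\<lambda>x. \<Sum>b\<in>Basis. q b x v *\<^sub>R b)" for v
      using q by (auto intro!: polynomial_function_sum polynomial_function_mult
          simp: real_polynomial_function_eq)
  qed
qed

lemma Ck_polynomial_function:
  "polynomial_function (p :: 'a::euclidean_space \<Rightarrow> 'b::euclidean_space) \<Longrightarrow> Ck k p"
proof (induction k arbitrary: p)
  case 0
  then show ?case by (simp add: continuous_on_polymonial_function)
next
  case (Suc k)
  then show ?case using polynomial_function_has_derivative[OF Suc.prems] by auto
qed

lemma smooth_map_polynomial_function:
  "polynomial_function (p :: 'a::euclidean_space \<Rightarrow> 'b::euclidean_space) \<Longrightarrow> smooth_map p"
  unfolding smooth_map_def by (simp add: Ck_polynomial_function)

lemma continuous_on_det_3: "continuous_on S (det :: real^3^3 \<Rightarrow> real)"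
proof -
  have "continuous_on S (\<lambda>F::real^3^3. F$1$1 * F$2$2 * F$3$3 + F$1$2 * F$2$3 * F$3$1
      + F$1$3 * F$2$1 * F$3$2 - F$1$1 * F$2$3 * F$3$2 - F$1$2 * F$2$1 * F$3$3
      - F$1$3 * F$2$2 * F$3$1)"
    by (intro continuous_intros)
  then show ?thesis by (simp add: det_3[abs_def])
qed

lemma eventually_at_within_ball:
  fixes x :: "'a::metric_space"
  assumes "eventually P (at x within K)" "P x"
  obtains r where "r > 0" "\<And>y. y \<in> K \<Longrightarrow> dist y x < r \<Longrightarrow> P y"
  using assms unfolding eventually_at by metis

lemma compact_ball_subcover_list:
  fixes K :: "'a::metric_space set"
  assumes "compact K" "\<And>x. x \<in> K \<Longrightarrow> 0 < R x"
  obtains xs where "set xs \<subseteq> K" "K \<subseteq> (\<Union>x\<in>set xs. ball x (R x))"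
proof -
  have "K \<subseteq> (\<Union>x\<in>K. ball x (R x))"
    using assms(2) by force
  then obtain F where "F \<subseteq> K" "finite F" "K \<subseteq> (\<Union>x\<in>F. ball x (R x))"
    using compactE_image[OF assms(1), of K "\<lambda>x. ball x (R x)"] by blast
  then show thesis
    using that finite_list[of F] by metis
qed

lemma ball_neq_UNIV: "ball x r \<noteq> (UNIV :: 'a::euclidean_space set)"
  using bounded_ball not_bounded_UNIV by metis

lemma eventually_less_add_ennreal:
  fixes f :: "'a \<Rightarrow> ennreal"
  assumes lsc: "\<And>c. c < a \<Longrightarrow> eventually (\<lambda>y. c < f y) F" and "a < top" "0 < e"
  shows "eventually (\<lambda>y. a < f y + ennreal e) F"
proof (cases "a < ennreal e")
  case True
  then show ?thesis
    by (intro always_eventually allI) (metis add.left_neutral add_strict_mono not_gr_zero)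
next
  case False
  then have "a - ennreal e < a"
    using assms(2,3) by (metis ennreal_between ennreal_less_zero_iff gr_zeroI not_less)
  from lsc[OF this] show ?thesis
    by (rule eventually_mono) (use False assms(2) in \<open>simp add: minus_less_iff_ennreal\<close>)
qed

lemma ennreal_le_of_le_add_epsilon_mult:
  fixes x y M :: ennreal
  assumes M: "M < top" and le: "\<And>\<epsilon>. 0 < \<epsilon> \<Longrightarrow> x \<le> y + ennreal \<epsilon> * M"
  shows "x \<le> y"
proof (rule ennreal_le_epsilon)
  fix e :: real assume e: "0 < e"
  obtain m where m: "M = ennreal m" "0 \<le> m"
    using M by (cases M rule: ennreal_cases) auto
  have "ennreal (e / (m + 1)) * M \<le> ennreal e"
    using e m by (auto simp: ennreal_mult'[symmetric] field_simps intro!: ennreal_leI)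
  then show "x \<le> y + ennreal e"
    using le[of "e / (m + 1)"] e m(2) by (meson add_left_mono divide_pos_pos order_trans
        add_nonneg_pos zero_less_one)
qed

lemma nn_integral_limsup_bounded_indicator:
  fixes f :: "nat \<Rightarrow> 'a \<Rightarrow> ennreal"
  assumes \<Omega>: "\<Omega> \<in> sets M" "emeasure M \<Omega> < \<infinity>" and f: "\<And>n. f n \<in> borel_measurable M"
    and bound: "\<And>n x. f n x \<le> ennreal B * indicator \<Omega> x"
  shows "limsup (\<lambda>n. integral\<^sup>N M (f n)) \<le> (\<integral>\<^sup>+ x. limsup (\<lambda>n. f n x) \<partial>M)"
proof (rule nn_integral_limsup[OF f, where w = "\<lambda>x. ennreal B * indicator \<Omega> x"])
  show "(\<lambda>x. ennreal B * indicator \<Omega> x) \<in> borel_measurable M"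
    using \<Omega>(1) by simp
  show "AE x in M. f n x \<le> ennreal B * indicator \<Omega> x" for n
    using bound by simp
  show "(\<integral>\<^sup>+ x. ennreal B * indicator \<Omega> x \<partial>M) < \<infinity>"
    using \<Omega> by (simp add: nn_integral_cmult_indicator ennreal_mult_less_top)
qed

lemma nn_integral_add_const_indicator:
  fixes f :: "'a \<Rightarrow> ennreal"
  assumes "(\<lambda>x. f x * indicator \<Omega> x) \<in> borel_measurable M" "\<Omega> \<in> sets M"
  shows "(\<integral>\<^sup>+ x. (f x + c) * indicator \<Omega> x \<partial>M) = (\<integral>\<^sup>+ x\<in>\<Omega>. f x \<partial>M) + c * emeasure M \<Omega>"
proof -
  have "(\<integral>\<^sup>+ x. (f x + c) * indicator \<Omega> x \<partial>M) = (\<integral>\<^sup>+ x. f x * indicator \<Omega> x + c * indicator \<Omega> x \<partial>M)"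
    by (simp add: distrib_right)
  also have "\<dots> = (\<integral>\<^sup>+ x\<in>\<Omega>. f x \<partial>M) + (\<integral>\<^sup>+ x. c * indicator \<Omega> x \<partial>M)"
    using assms by (intro nn_integral_add) auto
  also have "\<dots> = (\<integral>\<^sup>+ x\<in>\<Omega>. f x \<partial>M) + c * emeasure M \<Omega>"
    using assms(2) by (simp add: nn_integral_cmult_indicator)
  finally show ?thesis .
qed

lemma borel_measurable_lsc_indicator:
  fixes f :: "'a::euclidean_space \<Rightarrow> ennreal"
  assumes "open \<Omega>" "\<And>x a. x \<in> \<Omega> \<Longrightarrow> a < f x \<Longrightarrow> eventually (\<lambda>y. a < f y) (at x)"
  shows "(\<lambda>x. f x * indicator \<Omega> x) \<in> borel_measurable lebesgue"
proof (rule borel_measurableI_greater)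
  fix a :: ennreal
  have open_superlevel: "open {x\<in>\<Omega>. a < f x}"
    unfolding open_subopen[of "{x\<in>\<Omega>. a < f x}"]
  proof
    fix x assume x: "x \<in> {x\<in>\<Omega>. a < f x}"
    then have "eventually (\<lambda>y. y \<in> \<Omega> \<and> a < f y) (at x)"
      using assms by (auto intro: eventually_conj eventually_at_in_open')
    then obtain T where "open T" "x \<in> T" "\<And>y. y \<in> T \<Longrightarrow> y \<noteq> x \<Longrightarrow> y \<in> \<Omega> \<and> a < f y"
      unfolding eventually_at_topological by auto
    with x show "\<exists>T. open T \<and> x \<in> T \<and> T \<subseteq> {x\<in>\<Omega>. a < f x}"
      by (intro exI[of _ T]) auto
  qed
  have "{x \<in> space lebesgue. a < f x * indicator \<Omega> x} = {x\<in>\<Omega>. a < f x}"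
    by (auto simp: indicator_def)
  then show "{x \<in> space lebesgue. a < f x * indicator \<Omega> x} \<in> sets lebesgue"
    using open_superlevel by simp
qed

lemma borel_measurable_continuous_on_indicator_ennreal:
  fixes f :: "'a::euclidean_space \<Rightarrow> ennreal"
  assumes "open \<Omega>" "continuous_on \<Omega> f"
  shows "(\<lambda>x. f x * indicator \<Omega> x) \<in> borel_measurable lebesgue"
proof (rule borel_measurable_lsc_indicator[OF assms(1)])
  fix x a assume "x \<in> \<Omega>" "a < f x"
  moreover from this have "(f \<longlongrightarrow> f x) (at x)"
    using assms by (simp add: continuous_on_eq_continuous_at isCont_def)
  ultimately show "eventually (\<lambda>y. a < f y) (at x)"
    by (simp add: order_tendstoD(1))
qed

section \<open>Blending constant values with cutoff functions\<close>

definition cutoff :: "nat \<Rightarrow> 'a::metric_space set \<Rightarrow> 'a \<Rightarrow> real" where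
  "cutoff n U y = min 1 (real n * infdist y (- U))"

text \<open>Each entry (U, \<zeta>) of the list overlays the constant \<zeta> on U, earlier entries on top. As
  n \<rightarrow> \<infinity> the cutoffs increase to the indicators of the open sets U, so blend n L z0 converges
  pointwise to the value of the first entry whose set contains the point.\<close>
fun blend :: "nat \<Rightarrow> ('a::metric_space set \<times> 'b::real_normed_vector) list \<Rightarrow> ('a \<Rightarrow> 'b) \<Rightarrow> 'a \<Rightarrow> 'b" where
  "blend n [] z0 y = z0 y"
| "blend n ((U, \<zeta>) # L) z0 y = cutoff n U y *\<^sub>R \<zeta> + (1 - cutoff n U y) *\<^sub>R blend n L z0 y"

lemma cutoff_nonneg: "0 \<le> cutoff n U y"
  unfolding cutoff_def by (simp add: infdist_nonneg)

lemma cutoff_le_1: "cutoff n U y \<le> 1"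
  unfolding cutoff_def by simp

lemma cutoff_outside: "y \<notin> U \<Longrightarrow> cutoff n U y = 0"
  unfolding cutoff_def by simp

lemma eventually_cutoff_eq_1:
  assumes "open U" "U \<noteq> UNIV" "y \<in> U"
  shows "eventually (\<lambda>n. cutoff n U y = 1) sequentially"
proof -
  have "closed (- U)" "- U \<noteq> {}"
    using assms by auto
  then have "infdist y (- U) > 0"
    using assms(3) in_closed_iff_infdist_zero[of "- U" y] infdist_nonneg[of y "- U"] by auto
  moreover have "eventually (\<lambda>n. 1 / infdist y (- U) \<le> real n) sequentially"
    using filterlim_real_sequentially by (simp add: filterlim_at_top)
  ultimately show ?thesis
    by (elim eventually_mono) (simp add: cutoff_def field_simps)
qed

lemma continuous_on_cutoff [continuous_intros]: "continuous_on S (cutoff n U)"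
  unfolding cutoff_def by (intro continuous_intros)

lemma continuous_on_blend: "continuous_on S z0 \<Longrightarrow> continuous_on S (blend n L z0)"
proof (induction L)
  case Nil
  then show ?case by (simp add: continuous_on_eq[of S z0])
next
  case (Cons a L)
  then show ?case
    by (cases a) (auto intro!: continuous_intros simp del: blend.simps simp: blend.simps[abs_def])
qed

lemma blend_in_convex:
  assumes "convex C" "z0 y \<in> C" "\<And>U \<zeta>. (U, \<zeta>) \<in> set L \<Longrightarrow> y \<in> U \<Longrightarrow> \<zeta> \<in> C"
  shows "blend n L z0 y \<in> C"
  using assms(3)
proof (induction L)
  case Nil
  then show ?case using assms(2) by simp
next
  case (Cons a L)
  obtain U \<zeta> where a: "a = (U, \<zeta>)" by fastforce
  have IH: "blend n L z0 y \<in> C" using Cons by auto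
  show ?case
  proof (cases "y \<in> U")
    case True
    then have "\<zeta> \<in> C" using Cons.prems a by auto
    with IH show ?thesis
      unfolding a using cutoff_nonneg cutoff_le_1 by (auto intro!: convexD[OF assms(1)])
  next
    case False
    with IH show ?thesis unfolding a by (simp add: cutoff_outside)
  qed
qed

lemma blend_eventually_const:
  assumes "\<And>U \<zeta>. (U, \<zeta>) \<in> set L \<Longrightarrow> open U \<and> U \<noteq> UNIV" "y \<in> (\<Union>(U, \<zeta>)\<in>set L. U)"
  shows "\<exists>U \<zeta>. (U, \<zeta>) \<in> set L \<and> y \<in> U \<and> eventually (\<lambda>n. blend n L z0 y = \<zeta>) sequentially"
  using assms
proof (induction L)
  case Nil
  then show ?case by simp
next
  case (Cons a L)
  obtain U \<zeta> where a: "a = (U, \<zeta>)" by fastforce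
  show ?case
  proof (cases "y \<in> U")
    case True
    then have "eventually (\<lambda>n. cutoff n U y = 1) sequentially"
      using Cons.prems(1) a by (intro eventually_cutoff_eq_1) auto
    then have "eventually (\<lambda>n. blend n (a # L) z0 y = \<zeta>) sequentially"
      unfolding a by (auto elim: eventually_mono)
    then show ?thesis
      using True a by auto
  next
    case False
    then show ?thesis
      using Cons unfolding a by (auto simp: cutoff_outside)
  qed
qed

definition col_cross :: "real^2^3 \<Rightarrow> real^3" where
  "col_cross A = cross3 (column 1 A) (column 2 A)"

lemma det_augm: "det (augm A z) = z \<bullet> col_cross A"
  unfolding augm_def col_cross_def det_3 cross3_def column_def inner_vec_def sum_3
  by (simp add: vector_def algebra_simps)

lemma tendsto_augm [tendsto_intros]:
  assumes "(A \<longlongrightarrow> a) F" "(z \<longlongrightarrow> b) F"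
  shows "((\<lambda>x. augm (A x) (z x)) \<longlongrightarrow> augm a b) F"
  unfolding augm_def by (intro tendsto_vec_lambda) (auto intro!: tendsto_intros assms)

lemma continuous_on_augm [continuous_intros]:
  assumes "continuous_on S A" "continuous_on S z"
  shows "continuous_on S (\<lambda>x. augm (A x) (z x))"
  using assms unfolding continuous_on_def by (auto intro!: tendsto_intros)

lemma tendsto_col_cross [tendsto_intros]:
  assumes "(A \<longlongrightarrow> a) F"
  shows "((\<lambda>x. col_cross (A x)) \<longlongrightarrow> col_cross a) F"
proof (rule vec_tendstoI)
  fix i :: 3
  have "i = 1 \<or> i = 2 \<or> i = 3" using exhaust_3 by blast
  then show "((\<lambda>x. col_cross (A x) $ i) \<longlongrightarrow> col_cross a $ i) F"
    unfolding col_cross_def cross3_def column_def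
    by (elim disjE; simp add: vector_3; intro tendsto_intros assms)
qed

lemma continuous_on_col_cross [continuous_intros]:
  "continuous_on S A \<Longrightarrow> continuous_on S (\<lambda>x. col_cross (A x))"
  unfolding continuous_on_def by (auto intro!: tendsto_intros)

lemma augm_add: "augm (A + B) (z + w) = augm A z + augm B w"
  unfolding augm_def by (simp add: vec_eq_iff)

lemma norm_augm_zero_right: "norm (augm A 0) = norm A"
  unfolding augm_def norm_vec_def L2_set_def by (simp add: sum_3 sum_2)

lemma norm_augm_zero_left: "norm (augm 0 z) = norm z"
  unfolding augm_def norm_vec_def L2_set_def by (simp add: sum_3 sum_2)

lemma norm_augm_le: "norm (augm A z) \<le> norm A + norm z"
  using augm_add[of A 0 0 z] norm_triangle_ineq[of "augm A 0" "augm 0 z"]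
  by (simp add: norm_augm_zero_right norm_augm_zero_left)

lemma dist_augm_same_column: "dist (augm A z) (augm B z) = dist A B"
  using augm_add[of "A - B" B 0 z] by (simp add: dist_norm norm_augm_zero_right)

section \<open>Shrunk constraint sets\<close>

definition Lambda_margin :: "(real^2 \<Rightarrow> real^2^3) \<Rightarrow> nat \<Rightarrow> real \<Rightarrow> real^2 \<Rightarrow> (real^3) set" where
  "Lambda_margin G j \<alpha> x = {z. 1 / real j + \<alpha> \<le> z \<bullet> col_cross (G x) \<and> norm z \<le> real j - \<alpha>}"

lemma Lambda_eq_Lambda_margin_0: "Lambda G j x = Lambda_margin G j 0 x"
  unfolding Lambda_def Lambda_margin_def det_augm by simp

lemma Lambda_margin_combination:
  assumes "z \<in> Lambda_margin G j \<alpha> x" "w \<in> Lambda_margin G j \<beta> x" "0 \<le> t" "t \<le> 1"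
  shows "(1 - t) *\<^sub>R z + t *\<^sub>R w \<in> Lambda_margin G j ((1 - t) * \<alpha> + t * \<beta>) x"
proof -
  let ?n = "col_cross (G x)"
  have "(1 - t) * (1 / real j + \<alpha>) + t * (1 / real j + \<beta>) \<le> (1 - t) * (z \<bullet> ?n) + t * (w \<bullet> ?n)"
    using assms by (intro add_mono mult_left_mono) (auto simp: Lambda_margin_def)
  moreover have "norm ((1 - t) *\<^sub>R z + t *\<^sub>R w) \<le> (1 - t) * norm z + t * norm w"
    using assms(3,4) norm_triangle_ineq[of "(1 - t) *\<^sub>R z" "t *\<^sub>R w"] by simp
  moreover have "(1 - t) * norm z + t * norm w \<le> (1 - t) * (real j - \<alpha>) + t * (real j - \<beta>)"
    using assms by (intro add_mono mult_left_mono) (auto simp: Lambda_margin_def)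
  moreover have "(1 - t) * (1 / real j + \<alpha>) + t * (1 / real j + \<beta>) = 1 / real j + ((1 - t) * \<alpha> + t * \<beta>)"
    by (simp add: algebra_simps add_divide_distrib[symmetric])
  ultimately show ?thesis
    by (simp add: Lambda_margin_def inner_add_left algebra_simps)
qed

lemma convex_Lambda_margin: "convex (Lambda_margin G j \<alpha> x)"
  using Lambda_margin_combination[of _ G j \<alpha> x _ \<alpha>]
  by (auto simp: convex_alt algebra_simps)

lemma Lambda_margin_antimono: "\<alpha> \<le> \<beta> \<Longrightarrow> Lambda_margin G j \<beta> x \<subseteq> Lambda_margin G j \<alpha> x"
  unfolding Lambda_margin_def by auto

lemma Lambda_margin_subset_Lambda: "0 \<le> \<alpha> \<Longrightarrow> Lambda_margin G j \<alpha> x \<subseteq> Lambda G j x"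
  unfolding Lambda_eq_Lambda_margin_0 by (rule Lambda_margin_antimono)

lemma Lambda_margin_perturb:
  assumes "z \<in> Lambda_margin G j \<alpha> x" "norm (w - z) * (norm (col_cross (G x)) + 1) \<le> \<alpha>"
  shows "w \<in> Lambda G j x"
proof -
  let ?n = "col_cross (G x)"
  have z: "1 / real j + \<alpha> \<le> z \<bullet> ?n" "norm z \<le> real j - \<alpha>"
    using assms(1) by (auto simp: Lambda_margin_def)
  have split: "norm (w - z) * norm ?n + norm (w - z) \<le> \<alpha>"
    using assms(2) by (simp add: algebra_simps)
  have "z \<bullet> ?n - w \<bullet> ?n \<le> norm (w - z) * norm ?n"
    using Cauchy_Schwarz_ineq2[of "w - z" ?n] by (simp add: inner_diff_left)
  then have "1 / real j \<le> w \<bullet> ?n"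
    using z split norm_ge_zero[of "w - z"] by linarith
  moreover have "norm w \<le> norm z + norm (w - z)"
    using norm_triangle_ineq[of z "w - z"] by simp
  then have "norm w \<le> real j"
    using z split mult_nonneg_nonneg[OF norm_ge_zero[of "w - z"] norm_ge_zero[of ?n]] by linarith
  ultimately show ?thesis
    by (simp add: Lambda_eq_Lambda_margin_0 Lambda_margin_def)
qed

lemma Lambda_margin_point_below:
  fixes W :: "real^3^3 \<Rightarrow> 'b::linorder_topology"
  assumes W: "continuous_on UNIV W" and z1: "z1 \<in> Lambda G j x"
    and z0: "z0 \<in> Lambda_margin G j \<beta> x" "0 < \<beta>" and less: "W (augm (G x) z1) < c"
  obtains \<alpha> \<zeta> where "0 < \<alpha>" "\<zeta> \<in> Lambda_margin G j \<alpha> x" "W (augm (G x) \<zeta>) < c"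
proof -
  let ?\<zeta> = "\<lambda>t. (1 - t) *\<^sub>R z1 + t *\<^sub>R z0"
  have "((\<lambda>t. W (augm (G x) (?\<zeta> t))) \<longlongrightarrow> W (augm (G x) (?\<zeta> 0))) (at_right 0)"
    by (intro continuous_on_tendsto_compose[OF W] tendsto_intros) auto
  then have "((\<lambda>t. W (augm (G x) (?\<zeta> t))) \<longlongrightarrow> W (augm (G x) z1)) (at_right 0)"
    by simp
  then have "eventually (\<lambda>t. W (augm (G x) (?\<zeta> t)) < c) (at_right 0)"
    using less by (rule order_tendstoD)
  moreover have "eventually (\<lambda>t::real. 0 < t \<and> t < 1) (at_right 0)"
    unfolding eventually_at_right_field by (intro exI[of _ 1]) auto
  ultimately obtain t where t: "0 < t" "t < 1" "W (augm (G x) (?\<zeta> t)) < c"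
    using eventually_happens'[OF trivial_limit_at_right_real eventually_conj] by blast
  have "?\<zeta> t \<in> Lambda_margin G j (t * \<beta>) x"
    using Lambda_margin_combination[OF z1[unfolded Lambda_eq_Lambda_margin_0] z0(1), of t] t
    by simp
  then show thesis
    using that[of "t * \<beta>"] t z0(2) by simp
qed

lemma scaled_col_cross_in_Lambda_margin:
  assumes \<eta>: "0 < \<eta>" "\<eta> \<le> norm (col_cross (G x))" and j: "4 \<le> real j * \<eta>" "1 \<le> j"
  shows "(real j / (2 * norm (col_cross (G x)))) *\<^sub>R col_cross (G x) \<in> Lambda_margin G j (1 / 2) x"
proof -
  let ?n = "col_cross (G x)"
  let ?z = "(real j / (2 * norm ?n)) *\<^sub>R ?n"
  have n_pos: "0 < norm ?n"
    using \<eta> by linarith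
  have "real j * \<eta> \<le> real j * norm ?n"
    using \<eta>(2) by (simp add: mult_left_mono)
  moreover have "?z \<bullet> ?n = real j * norm ?n / 2"
    using n_pos by (simp add: power2_norm_eq_inner[symmetric] power2_eq_square)
  moreover have "1 / real j \<le> 1" "1 \<le> real j"
    using j(2) by simp_all
  moreover have "norm ?z = real j / 2"
    using n_pos by simp
  ultimately have "1 / real j + 1 / 2 \<le> ?z \<bullet> ?n" "norm ?z \<le> real j - 1 / 2"
    using j(1) by linarith+
  then show ?thesis
    unfolding Lambda_margin_def by simp
qed

lemma continuous_Lambda_margin_selection:
  assumes G: "continuous_on K G" and \<eta>: "0 < \<eta>" "\<And>y. y \<in> K \<Longrightarrow> \<eta> \<le> norm (col_cross (G y))"
    and j: "4 \<le> real j * \<eta>" "1 \<le> j"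
  obtains z0 where "continuous_on K z0" "\<And>y. y \<in> K \<Longrightarrow> z0 y \<in> Lambda_margin G j (1 / 2) y"
proof
  have "2 * norm (col_cross (G y)) \<noteq> 0" if "y \<in> K" for y
    using \<eta>(1) \<eta>(2)[OF that] by linarith
  then show "continuous_on K (\<lambda>y. (real j / (2 * norm (col_cross (G y)))) *\<^sub>R col_cross (G y))"
    by (intro continuous_intros G) auto
  show "(real j / (2 * norm (col_cross (G y)))) *\<^sub>R col_cross (G y) \<in> Lambda_margin G j (1 / 2) y"
    if "y \<in> K" for y
    using \<eta>(1) \<eta>(2)[OF that] j by (rule scaled_col_cross_in_Lambda_margin)
qed

lemma W_bounded_on_Lambda:
  fixes W :: "real^3^3 \<Rightarrow> ennreal"
  assumes p: "0 \<le> p"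
    and growth: "\<forall>\<delta>>0. \<exists>c. \<forall>F. det F \<ge> \<delta> \<longrightarrow> W F \<le> ennreal (c * (1 + norm F powr p))"
    and j: "1 \<le> j" and G: "bounded (G ` K)"
  obtains B where "\<And>y z. y \<in> K \<Longrightarrow> z \<in> Lambda G j y \<Longrightarrow> W (augm (G y) z) \<le> ennreal B"
proof -
  obtain S where S: "\<And>y. y \<in> K \<Longrightarrow> norm (G y) \<le> S"
    using G unfolding bounded_iff by auto
  have "0 < 1 / real j"
    using j by simp
  then obtain c where c: "\<And>F. det F \<ge> 1 / real j \<Longrightarrow> W F \<le> ennreal (c * (1 + norm F powr p))"
    using growth by blast
  have "W (augm (G y) z) \<le> ennreal (\<bar>c\<bar> * (1 + (S + real j) powr p))"
    if y: "y \<in> K" and z: "z \<in> Lambda G j y" for y z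
  proof -
    let ?F = "augm (G y) z"
    have "norm ?F \<le> S + real j"
      using norm_augm_le[of "G y" z] S[OF y] z by (auto simp: Lambda_def)
    then have "norm ?F powr p \<le> (S + real j) powr p"
      using p by (simp add: powr_mono2)
    then have "\<bar>c\<bar> * (1 + norm ?F powr p) \<le> \<bar>c\<bar> * (1 + (S + real j) powr p)"
      by (simp add: mult_left_mono)
    moreover have "c * (1 + norm ?F powr p) \<le> \<bar>c\<bar> * (1 + norm ?F powr p)"
      by (intro mult_right_mono) auto
    ultimately have "c * (1 + norm ?F powr p) \<le> \<bar>c\<bar> * (1 + (S + real j) powr p)"
      by linarith
    then show ?thesis
      using c[of ?F] z by (auto simp: Lambda_def intro: order_trans ennreal_leI)
  qed
  then show thesis
    using that by blast
qed

section \<open>The pointwise infimum\<close>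

definition Lambda_inf :: "(real^3^3 \<Rightarrow> ennreal) \<Rightarrow> (real^2 \<Rightarrow> real^2^3) \<Rightarrow> nat \<Rightarrow> real^2 \<Rightarrow> ennreal" where
  "Lambda_inf W G j x = (INF z\<in>Lambda G j x. W (augm (G x) z))"

lemma Lambda_inf_le: "z \<in> Lambda G j x \<Longrightarrow> Lambda_inf W G j x \<le> W (augm (G x) z)"
  unfolding Lambda_inf_def by (rule INF_lower)

text \<open>The matrices (G x|z) with norm z \<le> j form a compact set on which either det < 1/j or
  W > c'; this open condition persists for all (G y|z) with G y close enough to G x.\<close>
lemma Lambda_inf_lower_semicontinuous:
  assumes W: "continuous_on UNIV W" and G: "continuous_on K G" and x: "x \<in> K"
    and c: "c < Lambda_inf W G j x"
  shows "eventually (\<lambda>y. c < Lambda_inf W G j y) (at x within K)"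
proof -
  obtain c' where c': "c < c'" "c' < Lambda_inf W G j x"
    using dense[OF c] by blast
  define Ob where "Ob = {F::real^3^3. det F < 1 / real j} \<union> {F. c' < W F}"
  have "open Ob"
    unfolding Ob_def
    by (intro open_Un open_Collect_less continuous_on_det_3 W continuous_on_const)
  have "compact ((\<lambda>z. augm (G x) z) ` cball 0 (real j))"
    by (intro compact_continuous_image continuous_intros compact_cball)
  moreover have "(\<lambda>z. augm (G x) z) ` cball 0 (real j) \<subseteq> Ob"
  proof clarify
    fix z :: "real^3" assume "z \<in> cball 0 (real j)"
    then have "z \<in> Lambda G j x" if "1 / real j \<le> det (augm (G x) z)"
      using that by (simp add: Lambda_def)
    then show "augm (G x) z \<in> Ob"
      using c' Lambda_inf_le[of z G j x W] unfolding Ob_def by fastforce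
  qed
  ultimately obtain e where e: "e > 0" "(\<Union>F\<in>(\<lambda>z. augm (G x) z) ` cball 0 (real j). ball F e) \<subseteq> Ob"
    using compact_subset_open_imp_ball_epsilon_subset \<open>open Ob\<close> by metis
  have "eventually (\<lambda>y. dist (G y) (G x) < e) (at x within K)"
    using G x e(1) unfolding continuous_on_eq_continuous_within continuous_within
    by (blast intro: tendstoD)
  then show ?thesis
  proof (rule eventually_mono)
    fix y assume dy: "dist (G y) (G x) < e"
    have "c' \<le> W (augm (G y) z)" if z: "z \<in> Lambda G j y" for z
    proof -
      have "augm (G y) z \<in> ball (augm (G x) z) e"
        using dy by (simp add: dist_augm_same_column dist_commute)
      moreover have "z \<in> cball 0 (real j)"
        using z by (simp add: Lambda_def)
      ultimately have "augm (G y) z \<in> Ob"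
        using e(2) by blast
      then show ?thesis
        using z by (auto simp: Ob_def Lambda_def)
    qed
    then show "c < Lambda_inf W G j y"
      using c'(1) unfolding Lambda_inf_def by (meson INF_greatest order_less_le_trans)
  qed
qed

lemma borel_measurable_Lambda_inf:
  assumes \<Omega>: "open \<Omega>" and W: "continuous_on UNIV W" and G: "continuous_on (closure \<Omega>) G"
  shows "(\<lambda>x. Lambda_inf W G j x * indicator \<Omega> x) \<in> borel_measurable lebesgue"
proof (rule borel_measurable_lsc_indicator[OF \<Omega>])
  fix x a assume x: "x \<in> \<Omega>" and "a < Lambda_inf W G j x"
  then have "eventually (\<lambda>y. a < Lambda_inf W G j y) (at x within closure \<Omega>)"
    using closure_subset by (intro Lambda_inf_lower_semicontinuous[OF W G]) auto
  moreover have "at x = at x within \<Omega>"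
    using at_within_open[OF x \<Omega>] by simp
  ultimately show "eventually (\<lambda>y. a < Lambda_inf W G j y) (at x)"
    using filter_leD[OF at_le[OF closure_subset]] by metis
qed

lemma eventually_in_Lambda_margin:
  assumes G: "continuous_on K G" and x: "x \<in> K" and \<zeta>: "\<zeta> \<in> Lambda_margin G j \<alpha> x" and "\<beta> < \<alpha>"
  shows "eventually (\<lambda>y. \<zeta> \<in> Lambda_margin G j \<beta> y) (at x within K)"
proof -
  have "(G \<longlongrightarrow> G x) (at x within K)"
    using G x by (simp add: continuous_on_eq_continuous_within continuous_within)
  then have "((\<lambda>y. \<zeta> \<bullet> col_cross (G y)) \<longlongrightarrow> \<zeta> \<bullet> col_cross (G x)) (at x within K)"
    by (intro tendsto_intros)
  moreover have "1 / real j + \<beta> < \<zeta> \<bullet> col_cross (G x)"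
    using \<zeta> \<open>\<beta> < \<alpha>\<close> by (simp add: Lambda_margin_def)
  ultimately have "eventually (\<lambda>y. 1 / real j + \<beta> < \<zeta> \<bullet> col_cross (G y)) (at x within K)"
    by (rule order_tendstoD(1))
  then show ?thesis
    using \<zeta> \<open>\<beta> < \<alpha>\<close> by (auto simp: Lambda_margin_def elim!: eventually_mono)
qed

lemma Lambda_inf_approx_by_margin_point:
  fixes W :: "real^3^3 \<Rightarrow> ennreal"
  assumes W: "continuous_on UNIV W" and z0: "z0 \<in> Lambda_margin G j \<beta> x" "0 < \<beta>"
    and less: "Lambda_inf W G j x < c"
  obtains \<alpha> \<zeta> where "0 < \<alpha>" "\<zeta> \<in> Lambda_margin G j \<alpha> x" "W (augm (G x) \<zeta>) < c"
proof -
  obtain z1 where z1: "z1 \<in> Lambda G j x" "W (augm (G x) z1) < c"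
    using less unfolding Lambda_inf_def by (auto simp: INF_less_iff)
  show thesis
    by (rule Lambda_margin_point_below[OF W z1(1) z0 z1(2)]) (rule that)
qed

lemma Lambda_inf_local_near_optimal:
  assumes W: "continuous_on UNIV W" and G: "continuous_on K G" and x: "x \<in> K"
    and z0: "z0 \<in> Lambda_margin G j \<beta> x" "0 < \<beta>" "W (augm (G x) z0) < top" and e: "0 < e"
  shows "\<exists>\<zeta> \<alpha> r. 0 < \<alpha> \<and> 0 < r \<and> (\<forall>y\<in>K. dist y x < r \<longrightarrow>
       \<zeta> \<in> Lambda_margin G j \<alpha> y \<and> W (augm (G y) \<zeta>) < Lambda_inf W G j y + ennreal e)"
proof -
  define m where "m = Lambda_inf W G j"
  define e2 where "e2 = ennreal (e / 2)"
  have e_split: "ennreal e = e2 + e2"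
    unfolding e2_def using e by (simp flip: ennreal_plus)
  have "z0 \<in> Lambda G j x"
    using z0(1,2) Lambda_margin_subset_Lambda[of \<beta>] by auto
  then have mx_fin: "m x < top"
    using z0(3) unfolding m_def by (blast intro: Lambda_inf_le le_less_trans)
  then have "m x < m x + e2"
    unfolding e2_def using e by simp
  then obtain \<alpha> \<zeta> where \<alpha>: "0 < \<alpha>" and \<zeta>: "\<zeta> \<in> Lambda_margin G j \<alpha> x" "W (augm (G x) \<zeta>) < m x + e2"
    unfolding m_def by (rule Lambda_inf_approx_by_margin_point[OF W z0(1,2)])
  have ev_margin: "eventually (\<lambda>y. \<zeta> \<in> Lambda_margin G j (\<alpha> / 2) y) (at x within K)"
    using \<alpha> by (intro eventually_in_Lambda_margin[OF G x \<zeta>(1)]) simp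
  have "((\<lambda>y. W (augm (G y) \<zeta>)) \<longlongrightarrow> W (augm (G x) \<zeta>)) (at x within K)"
    using G x by (intro continuous_on_tendsto_compose[OF W] tendsto_intros)
      (auto simp: continuous_on_eq_continuous_within continuous_within)
  then have ev_W: "eventually (\<lambda>y. W (augm (G y) \<zeta>) < m x + e2) (at x within K)"
    using \<zeta>(2) by (rule order_tendstoD)
  have ev_m: "eventually (\<lambda>y. m x < m y + e2) (at x within K)"
    using eventually_less_add_ennreal[OF Lambda_inf_lower_semicontinuous[OF W G x]] mx_fin e
    unfolding m_def e2_def by simp
  have "eventually (\<lambda>y. \<zeta> \<in> Lambda_margin G j (\<alpha> / 2) y \<and> W (augm (G y) \<zeta>) < m y + ennreal e)
      (at x within K)"
  proof (rule eventually_mono[OF eventually_conj[OF ev_margin eventually_conj[OF ev_W ev_m]]])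
    fix y assume "\<zeta> \<in> Lambda_margin G j (\<alpha> / 2) y \<and> W (augm (G y) \<zeta>) < m x + e2 \<and> m x < m y + e2"
    moreover have "m x + e2 \<le> m y + ennreal e" if "m x < m y + e2"
      using that unfolding e_split by (metis add.assoc add_right_mono less_imp_le)
    ultimately show "\<zeta> \<in> Lambda_margin G j (\<alpha> / 2) y \<and> W (augm (G y) \<zeta>) < m y + ennreal e"
      by (meson order_less_le_trans)
  qed
  moreover have "\<zeta> \<in> Lambda_margin G j (\<alpha> / 2) x \<and> W (augm (G x) \<zeta>) < m x + ennreal e"
    using \<zeta> \<alpha> Lambda_margin_antimono[of "\<alpha> / 2" \<alpha>] e_split
    by (auto intro: order_less_le_trans add_left_mono simp: e2_def)
  ultimately obtain r where "r > 0"
    "\<And>y. y \<in> K \<Longrightarrow> dist y x < r \<Longrightarrow> \<zeta> \<in> Lambda_margin G j (\<alpha> / 2) y \<and> W (augm (G y) \<zeta>) < m y + ennreal e"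
    using eventually_at_within_ball by blast
  then show ?thesis
    using \<alpha> unfolding m_def by (intro exI[of _ \<zeta>] exI[of _ "\<alpha> / 2"] exI[of _ r]) auto
qed

lemma Lambda_inf_finite_cover:
  assumes W: "continuous_on UNIV W" and G: "continuous_on K G" and K: "compact K"
    and z0: "\<And>y. y \<in> K \<Longrightarrow> z0 y \<in> Lambda_margin G j \<beta> y \<and> W (augm (G y) (z0 y)) < top"
    and \<beta>: "0 < \<beta>" and e: "0 < e"
  obtains L \<alpha> where "0 < \<alpha>" "\<alpha> \<le> \<beta>"
    "\<And>U \<zeta>. (U, \<zeta>) \<in> set L \<Longrightarrow> open U \<and> U \<noteq> UNIV"
    "K \<subseteq> (\<Union>(U, \<zeta>)\<in>set L. U)"
    "\<And>U \<zeta> y. (U, \<zeta>) \<in> set L \<Longrightarrow> y \<in> K \<Longrightarrow> y \<in> U \<Longrightarrow>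
       \<zeta> \<in> Lambda_margin G j \<alpha> y \<and> W (augm (G y) \<zeta>) < Lambda_inf W G j y + ennreal e"
proof -
  define good where "good x \<zeta> \<alpha> r \<longleftrightarrow> 0 < \<alpha> \<and> 0 < r \<and> (\<forall>y\<in>K. dist y x < r \<longrightarrow>
      \<zeta> \<in> Lambda_margin G j \<alpha> y \<and> W (augm (G y) \<zeta>) < Lambda_inf W G j y + ennreal e)" for x \<zeta> \<alpha> r
  have "\<exists>\<zeta> \<alpha> r. good x \<zeta> \<alpha> r" if x: "x \<in> K" for x
    using Lambda_inf_local_near_optimal[OF W G x conjunct1[OF z0[OF x]] \<beta> conjunct2[OF z0[OF x]] e]
    unfolding good_def .
  then obtain Z A R where ZAR: "\<And>x. x \<in> K \<Longrightarrow> good x (Z x) (A x) (R x)"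
    by metis
  then obtain xs where xs: "set xs \<subseteq> K" "K \<subseteq> (\<Union>x\<in>set xs. ball x (R x))"
    using compact_ball_subcover_list[OF K, of R] unfolding good_def by blast
  define \<alpha> where "\<alpha> = Min (insert \<beta> (A ` set xs))"
  show thesis
  proof (rule that[of \<alpha> "map (\<lambda>x. (ball x (R x), Z x)) xs"])
    have "\<forall>a\<in>insert \<beta> (A ` set xs). 0 < a"
      using \<beta> xs(1) ZAR unfolding good_def by blast
    then show "0 < \<alpha>"
      unfolding \<alpha>_def by (simp add: Min_gr_iff)
    show "\<alpha> \<le> \<beta>"
      unfolding \<alpha>_def by simp
    show "open U \<and> U \<noteq> UNIV" if "(U, \<zeta>) \<in> set (map (\<lambda>x. (ball x (R x), Z x)) xs)" for U \<zeta>
      using that ball_neq_UNIV by auto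
    show "K \<subseteq> (\<Union>(U, \<zeta>)\<in>set (map (\<lambda>x. (ball x (R x), Z x)) xs). U)"
      using xs(2) by auto
    fix U \<zeta> y assume "(U, \<zeta>) \<in> set (map (\<lambda>x. (ball x (R x), Z x)) xs)" "y \<in> K" "y \<in> U"
    then obtain x where x: "x \<in> set xs" "\<zeta> = Z x" "dist y x < R x"
      by (auto simp: dist_commute)
    have "\<alpha> \<le> A x"
      unfolding \<alpha>_def using x(1) by simp
    moreover have "good x (Z x) (A x) (R x)"
      using ZAR xs(1) x(1) by blast
    ultimately show "\<zeta> \<in> Lambda_margin G j \<alpha> y \<and> W (augm (G y) \<zeta>) < Lambda_inf W G j y + ennreal e"
      using \<open>y \<in> K\<close> x(2,3) Lambda_margin_antimono[of \<alpha> "A x" G j y] unfolding good_def by blast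
  qed
qed

section \<open>Approximation by smooth admissible maps\<close>

lemma polynomial_function_approx_Lambda:
  assumes K: "compact K" and G: "continuous_on K G" and \<phi>: "continuous_on K \<phi>"
    and \<alpha>: "0 < \<alpha>" and in_margin: "\<And>y. y \<in> K \<Longrightarrow> \<phi> y \<in> Lambda_margin G j \<alpha> y" and e: "0 < e"
  obtains g where "polynomial_function g" "\<And>y. y \<in> K \<Longrightarrow> g y \<in> Lambda G j y \<and> norm (g y - \<phi> y) < e"
proof -
  have "bounded ((\<lambda>y. col_cross (G y)) ` K)"
    by (intro compact_imp_bounded compact_continuous_image continuous_intros G K)
  then obtain B where B: "0 < B" "\<And>y. y \<in> K \<Longrightarrow> norm (col_cross (G y)) \<le> B"
    unfolding bounded_pos by auto
  define \<delta> where "\<delta> = min e (\<alpha> / (B + 1))"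
  have "0 < \<delta>"
    unfolding \<delta>_def using e \<alpha> B(1) by simp
  then obtain g where g: "polynomial_function g" "\<And>y. y \<in> K \<Longrightarrow> norm (\<phi> y - g y) < \<delta>"
    using Stone_Weierstrass_polynomial_function[OF K \<phi>] by meson
  show thesis
  proof (rule that[OF g(1)], rule conjI)
    fix y assume y: "y \<in> K"
    have "norm (g y - \<phi> y) < \<delta>"
      using g(2)[OF y] by (simp add: norm_minus_commute)
    then show "norm (g y - \<phi> y) < e"
      unfolding \<delta>_def by simp
    have "norm (g y - \<phi> y) \<le> \<alpha> / (B + 1)"
      using \<open>norm (g y - \<phi> y) < \<delta>\<close> unfolding \<delta>_def by simp
    then have "norm (g y - \<phi> y) * (norm (col_cross (G y)) + 1) \<le> \<alpha> / (B + 1) * (B + 1)"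
      using B(1) \<alpha> B(2)[OF y] by (intro mult_mono) simp_all
    then show "g y \<in> Lambda G j y"
      using B(1) by (intro Lambda_margin_perturb[OF in_margin[OF y]]) simp
  qed
qed

lemma polynomial_function_approx_Lambda_sequence:
  assumes K: "compact K" and G: "continuous_on K G" and \<phi>: "\<And>n. continuous_on K (\<phi> n)"
    and \<alpha>: "0 < \<alpha>" and in_margin: "\<And>n y. y \<in> K \<Longrightarrow> \<phi> n y \<in> Lambda_margin G j \<alpha> y"
  obtains g where "\<And>n. polynomial_function (g n)" "\<And>n y. y \<in> K \<Longrightarrow> g n y \<in> Lambda G j y"
    "\<And>y. y \<in> K \<Longrightarrow> (\<lambda>n. g n y - \<phi> n y) \<longlonglongrightarrow> 0"
proof -
  have "\<forall>n. \<exists>g. polynomial_function g \<and> (\<forall>y\<in>K. g y \<in> Lambda G j y \<and> norm (g y - \<phi> n y) < 1 / Suc n)"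
  proof
    fix n
    obtain g where "polynomial_function g"
      "\<And>y. y \<in> K \<Longrightarrow> g y \<in> Lambda G j y \<and> norm (g y - \<phi> n y) < 1 / Suc n"
      by (rule polynomial_function_approx_Lambda[OF K G \<phi> \<alpha> in_margin[of _ n], where e = "1 / Suc n"])
        simp_all
    then show "\<exists>g. polynomial_function g \<and> (\<forall>y\<in>K. g y \<in> Lambda G j y \<and> norm (g y - \<phi> n y) < 1 / Suc n)"
      by blast
  qed
  from choice[OF this] obtain g where g: "\<And>n. polynomial_function (g n)"
    "\<And>n y. y \<in> K \<Longrightarrow> g n y \<in> Lambda G j y \<and> norm (g n y - \<phi> n y) < 1 / Suc n"
    by blast
  show thesis
  proof (rule that[of g])
    show "polynomial_function (g n)" for n
      using g(1) .
    show "g n y \<in> Lambda G j y" if "y \<in> K" for n y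
      using g(2)[OF that] by blast
    show "(\<lambda>n. g n y - \<phi> n y) \<longlonglongrightarrow> 0" if y: "y \<in> K" for y
    proof (rule Lim_null_comparison)
      show "eventually (\<lambda>n. norm (g n y - \<phi> n y) \<le> 1 / Suc n) sequentially"
        using g(2)[OF y] by (intro always_eventually allI less_imp_le) blast
      show "(\<lambda>n. 1 / real (Suc n)) \<longlonglongrightarrow> 0"
        using LIMSEQ_Suc[OF lim_const_over_n[of 1]] by simp
    qed
  qed
qed

lemma Lambda_inf_polynomial_approx:
  assumes W: "continuous_on UNIV W" and G: "continuous_on K G" and K: "compact K"
    and z0: "continuous_on K z0" "\<And>y. y \<in> K \<Longrightarrow> z0 y \<in> Lambda_margin G j \<beta> y"
      "\<And>y. y \<in> K \<Longrightarrow> W (augm (G y) (z0 y)) < top"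
    and \<beta>: "0 < \<beta>" and e: "0 < e"
  obtains g where "\<And>n. polynomial_function (g n)" "\<And>n y. y \<in> K \<Longrightarrow> g n y \<in> Lambda G j y"
    "\<And>y. y \<in> K \<Longrightarrow> limsup (\<lambda>n. W (augm (G y) (g n y))) < Lambda_inf W G j y + ennreal e"
proof -
  obtain L \<alpha> where \<alpha>: "0 < \<alpha>" "\<alpha> \<le> \<beta>"
    and L_open: "\<And>U \<zeta>. (U, \<zeta>) \<in> set L \<Longrightarrow> open U \<and> U \<noteq> UNIV"
    and L_cover: "K \<subseteq> (\<Union>(U, \<zeta>)\<in>set L. U)"
    and L_good: "\<And>U \<zeta> y. (U, \<zeta>) \<in> set L \<Longrightarrow> y \<in> K \<Longrightarrow> y \<in> U \<Longrightarrow>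
       \<zeta> \<in> Lambda_margin G j \<alpha> y \<and> W (augm (G y) \<zeta>) < Lambda_inf W G j y + ennreal e"
    using Lambda_inf_finite_cover[OF W G K _ \<beta> e] z0(2,3) by metis
  have "blend n L z0 y \<in> Lambda_margin G j \<alpha> y" if y: "y \<in> K" for n y
    using z0(2)[OF y] Lambda_margin_antimono[OF \<alpha>(2)] L_good[OF _ y]
    by (intro blend_in_convex convex_Lambda_margin) auto
  then obtain g where g: "\<And>n. polynomial_function (g n)" "\<And>n y. y \<in> K \<Longrightarrow> g n y \<in> Lambda G j y"
    "\<And>y. y \<in> K \<Longrightarrow> (\<lambda>n. g n y - blend n L z0 y) \<longlonglongrightarrow> 0"
    by (rule polynomial_function_approx_Lambda_sequence[where \<phi> = "\<lambda>n. blend n L z0",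
          OF K G continuous_on_blend[OF z0(1)] \<alpha>(1)]) (assumption, rule that)
  show thesis
  proof (rule that[OF g(1,2)])
    fix y assume y: "y \<in> K"
    have "\<exists>U \<zeta>. (U, \<zeta>) \<in> set L \<and> y \<in> U \<and> eventually (\<lambda>n. blend n L z0 y = \<zeta>) sequentially"
      using L_open subsetD[OF L_cover y] by (rule blend_eventually_const)
    then obtain U \<zeta> where U: "(U, \<zeta>) \<in> set L" "y \<in> U" and
      blend_eq: "eventually (\<lambda>n. blend n L z0 y = \<zeta>) sequentially"
      by blast
    have "(\<lambda>n. (g n y - blend n L z0 y) + blend n L z0 y) \<longlonglongrightarrow> 0 + \<zeta>"
      using g(3)[OF y] tendsto_eventually[OF blend_eq] by (rule tendsto_add)
    then have "(\<lambda>n. W (augm (G y) (g n y))) \<longlonglongrightarrow> W (augm (G y) \<zeta>)"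
      by (intro continuous_on_tendsto_compose[OF W] tendsto_intros) auto
    then show "limsup (\<lambda>n. W (augm (G y) (g n y))) < Lambda_inf W G j y + ennreal e"
      using L_good[OF U(1) y U(2)] by (simp add: lim_imp_Limsup)
  qed
qed

lemma smooth_Lambda_INF_le_integral_limsup:
  fixes \<Omega> :: "(real^2) set" and W :: "real^3^3 \<Rightarrow> ennreal"
  assumes \<Omega>: "open \<Omega>" "bounded \<Omega>" and W: "continuous_on UNIV W"
    and G: "continuous_on (closure \<Omega>) G"
    and bound: "\<And>y z. y \<in> closure \<Omega> \<Longrightarrow> z \<in> Lambda G j y \<Longrightarrow> W (augm (G y) z) \<le> ennreal B"
    and g: "\<And>n. polynomial_function (g n)" "\<And>n y. y \<in> closure \<Omega> \<Longrightarrow> g n y \<in> Lambda G j y"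
  shows "(INF \<phi>\<in>{\<phi>. smooth_map \<phi> \<and> (\<forall>x\<in>closure \<Omega>. \<phi> x \<in> Lambda G j x)}.
            \<integral>\<^sup>+ x\<in>\<Omega>. W (augm (G x) (\<phi> x)) \<partial>lebesgue)
         \<le> (\<integral>\<^sup>+ x\<in>\<Omega>. limsup (\<lambda>n. W (augm (G x) (g n x))) \<partial>lebesgue)"
  (is "?lhs \<le> _")
proof -
  define f where "f n x = W (augm (G x) (g n x)) * indicator \<Omega> x" for n x
  have f_meas: "f n \<in> borel_measurable lebesgue" for n
    unfolding f_def
    using continuous_on_subset[OF G closure_subset] continuous_on_polymonial_function[OF g(1)]
    by (intro borel_measurable_continuous_on_indicator_ennreal[OF \<Omega>(1)]
        continuous_on_compose2[OF W] continuous_on_augm) auto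
  have f_bound: "f n x \<le> ennreal B * indicator \<Omega> x" for n x
  proof (cases "x \<in> \<Omega>")
    case True
    then have "x \<in> closure \<Omega>"
      using closure_subset by blast
    then show ?thesis
      unfolding f_def using bound[OF _ g(2)] True by simp
  qed (simp add: f_def)
  have "?lhs \<le> integral\<^sup>N lebesgue (f n)" for n
    unfolding f_def using g(2)
    by (intro INF_lower) (auto simp: g(1) smooth_map_polynomial_function)
  then have "?lhs \<le> limsup (\<lambda>n. integral\<^sup>N lebesgue (f n))"
    by (intro le_Limsup[OF sequentially_bot always_eventually] allI)
  also have "\<dots> \<le> (\<integral>\<^sup>+ x. limsup (\<lambda>n. f n x) \<partial>lebesgue)"
  proof (rule nn_integral_limsup_bounded_indicator[OF _ _ f_meas f_bound])
    show "\<Omega> \<in> sets lebesgue"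
      using \<Omega>(1) by simp
    show "emeasure lebesgue \<Omega> < \<infinity>"
      using fmeasurableD2[OF lmeasurable_open[OF \<Omega>(2,1)]] by (simp add: less_top)
  qed
  also have "(\<lambda>x. limsup (\<lambda>n. f n x)) = (\<lambda>x. limsup (\<lambda>n. W (augm (G x) (g n x))) * indicator \<Omega> x)"
    by (rule ext) (simp add: f_def indicator_def Limsup_const)
  finally show ?thesis .
qed

lemma smooth_Lambda_integral_le_add:
  fixes \<Omega> :: "(real^2) set" and W :: "real^3^3 \<Rightarrow> ennreal"
  assumes \<Omega>: "open \<Omega>" "bounded \<Omega>" and W: "continuous_on UNIV W"
    and G: "continuous_on (closure \<Omega>) G"
    and z0: "continuous_on (closure \<Omega>) z0" "\<And>y. y \<in> closure \<Omega> \<Longrightarrow> z0 y \<in> Lambda_margin G j \<beta> y"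
      "0 < \<beta>"
    and bound: "\<And>y z. y \<in> closure \<Omega> \<Longrightarrow> z \<in> Lambda G j y \<Longrightarrow> W (augm (G y) z) \<le> ennreal B"
    and \<epsilon>: "0 < \<epsilon>"
  shows "(INF \<phi>\<in>{\<phi>. smooth_map \<phi> \<and> (\<forall>x\<in>closure \<Omega>. \<phi> x \<in> Lambda G j x)}.
            \<integral>\<^sup>+ x\<in>\<Omega>. W (augm (G x) (\<phi> x)) \<partial>lebesgue)
         \<le> (\<integral>\<^sup>+ x\<in>\<Omega>. Lambda_inf W G j x \<partial>lebesgue) + ennreal \<epsilon> * emeasure lebesgue \<Omega>"
  (is "?lhs \<le> _")
proof -
  have "W (augm (G y) (z0 y)) < top" if y: "y \<in> closure \<Omega>" for y
    using bound[OF y subsetD[OF Lambda_margin_subset_Lambda z0(2)[OF y]]] z0(3)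
    by (simp add: le_less_trans)
  then obtain g where g: "\<And>n. polynomial_function (g n)" "\<And>n y. y \<in> closure \<Omega> \<Longrightarrow> g n y \<in> Lambda G j y"
    and g_lim: "\<And>y. y \<in> closure \<Omega> \<Longrightarrow>
      limsup (\<lambda>n. W (augm (G y) (g n y))) < Lambda_inf W G j y + ennreal \<epsilon>"
    using Lambda_inf_polynomial_approx[OF W G compact_closure[THEN iffD2, OF \<Omega>(2)] z0(1,2) _ z0(3) \<epsilon>]
    by metis
  have pointwise: "limsup (\<lambda>n. W (augm (G x) (g n x))) * indicator \<Omega> x
      \<le> (Lambda_inf W G j x + ennreal \<epsilon>) * indicator \<Omega> x" for x
  proof (cases "x \<in> \<Omega>")
    case True
    then have "x \<in> closure \<Omega>"
      using closure_subset by blast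
    with True show ?thesis
      using g_lim by (simp add: less_imp_le)
  qed simp
  have "?lhs \<le> (\<integral>\<^sup>+ x\<in>\<Omega>. limsup (\<lambda>n. W (augm (G x) (g n x))) \<partial>lebesgue)"
    using \<Omega> W G bound g by (rule smooth_Lambda_INF_le_integral_limsup)
  also have "\<dots> \<le> (\<integral>\<^sup>+ x. (Lambda_inf W G j x + ennreal \<epsilon>) * indicator \<Omega> x \<partial>lebesgue)"
    using pointwise by (rule nn_integral_mono)
  also have "\<dots> = (\<integral>\<^sup>+ x\<in>\<Omega>. Lambda_inf W G j x \<partial>lebesgue) + ennreal \<epsilon> * emeasure lebesgue \<Omega>"
    using borel_measurable_Lambda_inf[OF \<Omega>(1) W G] \<Omega>(1)
    by (intro nn_integral_add_const_indicator) auto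
  finally show ?thesis .
qed

theorem smooth_Lambda_relaxation:
  fixes \<Omega> :: "(real^2) set" and W :: "real^3^3 \<Rightarrow> ennreal"
  assumes \<Omega>: "open \<Omega>" "bounded \<Omega>" and W: "continuous_on UNIV W"
    and G: "continuous_on (closure \<Omega>) G"
    and z0: "continuous_on (closure \<Omega>) z0" "\<And>y. y \<in> closure \<Omega> \<Longrightarrow> z0 y \<in> Lambda_margin G j \<beta> y"
      "0 < \<beta>"
    and bound: "\<And>y z. y \<in> closure \<Omega> \<Longrightarrow> z \<in> Lambda G j y \<Longrightarrow> W (augm (G y) z) \<le> ennreal B"
  shows "(INF \<phi>\<in>{\<phi>. smooth_map \<phi> \<and> (\<forall>x\<in>closure \<Omega>. \<phi> x \<in> Lambda G j x)}.
            \<integral>\<^sup>+ x\<in>\<Omega>. W (augm (G x) (\<phi> x)) \<partial>lebesgue)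
         = (\<integral>\<^sup>+ x\<in>\<Omega>. Lambda_inf W G j x \<partial>lebesgue)"
proof (rule antisym)
  have "emeasure lebesgue \<Omega> < top"
    using fmeasurableD2[OF lmeasurable_open[OF \<Omega>(2,1)]] by (simp add: less_top)
  then show "(INF \<phi>\<in>{\<phi>. smooth_map \<phi> \<and> (\<forall>x\<in>closure \<Omega>. \<phi> x \<in> Lambda G j x)}.
            \<integral>\<^sup>+ x\<in>\<Omega>. W (augm (G x) (\<phi> x)) \<partial>lebesgue) \<le> (\<integral>\<^sup>+ x\<in>\<Omega>. Lambda_inf W G j x \<partial>lebesgue)"
    by (rule ennreal_le_of_le_add_epsilon_mult)
      (use \<Omega> W G z0 bound in \<open>rule smooth_Lambda_integral_le_add\<close>)
  show "(\<integral>\<^sup>+ x\<in>\<Omega>. Lambda_inf W G j x \<partial>lebesgue) \<le> (INF \<phi>\<in>{\<phi>. smooth_map \<phi> \<and>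
      (\<forall>x\<in>closure \<Omega>. \<phi> x \<in> Lambda G j x)}. \<integral>\<^sup>+ x\<in>\<Omega>. W (augm (G x) (\<phi> x)) \<partial>lebesgue)"
  proof (intro INF_greatest nn_integral_mono)
    fix \<phi> x assume "\<phi> \<in> {\<phi>. smooth_map \<phi> \<and> (\<forall>x\<in>closure \<Omega>. \<phi> x \<in> Lambda G j x)}"
    then have "x \<in> \<Omega> \<Longrightarrow> Lambda_inf W G j x \<le> W (augm (G x) (\<phi> x))"
      using closure_subset by (blast intro: Lambda_inf_le)
    then show "Lambda_inf W G j x * indicator \<Omega> x \<le> W (augm (G x) (\<phi> x)) * indicator \<Omega> x"
      by (cases "x \<in> \<Omega>") auto
  qed
qed

theorem lemma4p7:
  fixes W :: "real^3^3 \<Rightarrow> ennreal" and p :: real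
  assumes p: "1 < p"
    and H1: "continuous_on UNIV W"
    and H2: "\<And>R F. R \<in> SO3 \<Longrightarrow> W (R ** F) = W F"
    and H3: "\<And>F. W F < \<infinity> \<longleftrightarrow> det F > 0"
    and H4: "\<exists>C1>0. \<forall>F. ennreal (C1 * norm F powr p - 1 / C1) \<le> W F"
    and H5: "\<forall>\<delta>>0. \<exists>c. \<forall>F. det F \<ge> \<delta> \<longrightarrow> W F \<le> ennreal (c * (1 + norm F powr p))"
  shows "\<exists>J :: real \<Rightarrow> real \<Rightarrow> nat. \<forall>(\<Omega> :: (real^2) set) (\<eta>::real) (G :: real^2 \<Rightarrow> real^2^3).
           open \<Omega> \<and> bounded \<Omega> \<and> \<eta> > 0 \<and>
           uniformly_continuous_on (closure \<Omega>) G \<and>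
           (\<forall>x\<in>closure \<Omega>. norm (cross3 (column 1 (G x)) (column 2 (G x))) \<ge> \<eta>) \<longrightarrow>
           (\<forall>j\<ge>J \<eta> (SUP x\<in>closure \<Omega>. norm (G x)). j \<ge> 1 \<longrightarrow>
              (INF \<phi>\<in>{\<phi> :: real^2 \<Rightarrow> real^3. smooth_map \<phi> \<and> (\<forall>x\<in>closure \<Omega>. \<phi> x \<in> Lambda G j x)}.
                  \<integral>\<^sup>+ x\<in>\<Omega>. W (augm (G x) (\<phi> x)) \<partial>lebesgue)
              = (\<integral>\<^sup>+ x\<in>\<Omega>. (INF z\<in>Lambda G j x. W (augm (G x) z)) \<partial>lebesgue))"
proof (intro exI[of _ "\<lambda>\<eta> _. nat \<lceil>4 / \<eta>\<rceil>"] allI impI)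
  fix \<Omega> :: "(real^2) set" and \<eta> :: real and G :: "real^2 \<Rightarrow> real^2^3" and j :: nat
  assume hyp: "open \<Omega> \<and> bounded \<Omega> \<and> \<eta> > 0 \<and> uniformly_continuous_on (closure \<Omega>) G \<and>
      (\<forall>x\<in>closure \<Omega>. norm (cross3 (column 1 (G x)) (column 2 (G x))) \<ge> \<eta>)"
    and j: "nat \<lceil>4 / \<eta>\<rceil> \<le> j" "1 \<le> j"
  then have \<Omega>: "open \<Omega>" "bounded \<Omega>" and \<eta>: "0 < \<eta>"
    and G: "continuous_on (closure \<Omega>) G" and normal: "\<And>y. y \<in> closure \<Omega> \<Longrightarrow> \<eta> \<le> norm (col_cross (G y))"
    by (auto simp: col_cross_def uniformly_continuous_imp_continuous)
  have "4 \<le> real j * \<eta>"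
    using j(1) \<eta> by (simp add: field_simps nat_le_iff ceiling_le_iff)
  then obtain z0 where z0: "continuous_on (closure \<Omega>) z0"
    "\<And>y. y \<in> closure \<Omega> \<Longrightarrow> z0 y \<in> Lambda_margin G j (1 / 2) y"
    using G \<eta> normal j(2) by (metis continuous_Lambda_margin_selection)
  have "bounded (G ` closure \<Omega>)"
    using \<Omega>(2) by (intro compact_imp_bounded compact_continuous_image G) (simp add: compact_closure)
  moreover have "0 \<le> p"
    using p by simp
  ultimately obtain B where B: "\<And>y z. y \<in> closure \<Omega> \<Longrightarrow> z \<in> Lambda G j y \<Longrightarrow> W (augm (G y) z) \<le> ennreal B"
    using H5 j(2) by (metis W_bounded_on_Lambda)
  show "(INF \<phi>\<in>{\<phi>. smooth_map \<phi> \<and> (\<forall>x\<in>closure \<Omega>. \<phi> x \<in> Lambda G j x)}.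
        \<integral>\<^sup>+ x\<in>\<Omega>. W (augm (G x) (\<phi> x)) \<partial>lebesgue)
      = (\<integral>\<^sup>+ x\<in>\<Omega>. (INF z\<in>Lambda G j x. W (augm (G x) z)) \<partial>lebesgue)"
    unfolding Lambda_inf_def[symmetric]
    using \<Omega> H1 G z0 half_gt_zero[OF zero_less_one] B by (rule smooth_Lambda_relaxation)
qed

end
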